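(* Let $X,Y$ be nonempty sets and let $F\colon X^*\to Y$ be a function such that $F_1$ is one-to-one. Consider: (i) $F$ is preassociative and unarily quasi-range-idempotent; (ii) there is a unique $\varepsilon$-standard operation $H\colon X^*\to X\cup\{\varepsilon\}$ such that $F^{\flat}=F_1\circ H^{\flat}$, namely $H^{\flat}=F_1^{-1}\circ F^{\flat}$, and this operation is associative and unarily idempotent. Then (i) implies (ii). If $F$ is standard, then (ii) implies (i).
   Context: $X^*=\bigcup_{n\geqslant 0}X^n$ is the set of finite tuples over $X$, $X^0=\{\varepsilon\}$ with $\varepsilon\notin X$ the empty tuple; $F(\mathbf{x},\mathbf{y})$ denotes $F$ applied to the concatenation, and concatenation with $\varepsilon$ leaves tuples unchanged. $F_n=F|_{X^n}$ ($X^1$ identified with $X$), $F^{\flat}=F|_{X^*\setminus\{\varepsilon\}}$. $F$ is standard if $F(\mathbf{x})=F(\varepsilon)$ only for $\mathbf{x}=\varepsilon$. $F$ is preassociative if for all $\mathbf{x},\mathbf{y},\mathbf{y}',\mathbf{z}\in X^*$, $F(\mathbf{y})=F(\mathbf{y}')$ implies $F(\mathbf{x},\mathbf{y},\mathbf{z})=F(\mathbf{x},\mathbf{y}',\mathbf{z})$. $F$ is unarily quasi-range-idempotent if $\mathrm{ran}(F_1)=\mathrm{ran}(F^{\flat})$. An operation $H\colon X^*\to X\cup\{\varepsilon\}$ is $\varepsilon$-standard if it is standard and $H(\varepsilon)=\varepsilon$; it is associative if $H(\mathbf{x},\mathbf{y},\mathbf{z})=H(\mathbf{x},H(\mathbf{y}),\mathbf{z})$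 for all $\mathbf{x},\mathbf{y},\mathbf{z}\in X^*$ (a value $\varepsilon$ treated as the empty tuple); it is unarily idempotent if $H_1$ is the identity of $X$. *)

theory Defs
  imports Main
begin

text \<open>An operation
  H : X^* -> X \<union> {\<epsilon>} is modelled as 'a list \<Rightarrow> 'a option, with None standing for \<epsilon>;
  a value of H is turned back into a tuple by opt_tuple.\<close>

definition standard :: "('a list \<Rightarrow> 'b) \<Rightarrow> bool" where
  "standard F \<longleftrightarrow> (\<forall>x. F x = F [] \<longrightarrow> x = [])"

definition preassociative :: "('a list \<Rightarrow> 'b) \<Rightarrow> bool" where
  "preassociative F \<longleftrightarrow>
     (\<forall>x y y' z. F y = F y' \<longrightarrow> F (x @ y @ z) = F (x @ y' @ z))"

definition unarily_quasi_range_idempotent :: "('a list \<Rightarrow> 'b) \<Rightarrow> bool" where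
  "unarily_quasi_range_idempotent F \<longleftrightarrow>
     range (\<lambda>a. F [a]) = F ` {x. x \<noteq> []}"

definition eps_standard :: "('a list \<Rightarrow> 'a option) \<Rightarrow> bool" where
  "eps_standard H \<longleftrightarrow> standard H \<and> H [] = None"

definition opt_tuple :: "'a option \<Rightarrow> 'a list" where
  "opt_tuple v = (case v of None \<Rightarrow> [] | Some a \<Rightarrow> [a])"

definition associative_op :: "('a list \<Rightarrow> 'a option) \<Rightarrow> bool" where
  "associative_op H \<longleftrightarrow>
     (\<forall>x y z. H (x @ y @ z) = H (x @ opt_tuple (H y) @ z))"

definition unarily_idempotent :: "('a list \<Rightarrow> 'a option) \<Rightarrow> bool" where
  "unarily_idempotent H \<longleftrightarrow> (\<forall>a. H [a] = Some a)"

text \<open>F^flat = F_1 \<circ> H^flat : for every nonempty tuple x, H x is an element a of X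
  (not \<epsilon>) and F x = F [a].\<close>
definition factors_through :: "('a list \<Rightarrow> 'b) \<Rightarrow> ('a list \<Rightarrow> 'a option) \<Rightarrow> bool" where
  "factors_through F H \<longleftrightarrow> (\<forall>x. x \<noteq> [] \<longrightarrow> (\<exists>a. H x = Some a \<and> F x = F [a]))"

end

theory Submission
  imports Defs
begin

text \<open>Since F_1 is one-to-one, a factorization F^flat = F_1 \<circ> H^flat forces
  H^flat = F_1^-1 \<circ> F^flat; quasi-range-idempotence is exactly what makes this composite
  defined. Under this correspondence preassociativity of F and associativity of H are
  translations of each other: replacing a block y by H y does not change the value of F
  on y, so the value of F on the whole tuple is unchanged, and conversely. Standardness
  of F is needed only to handle replacing a block by the empty tuple.\<close>

definition canonical_op :: "('a list \<Rightarrow> 'b) \<Rightarrow> 'a list \<Rightarrow> 'a option" where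
  "canonical_op F x = (if x = [] then None else Some (the_inv (\<lambda>a. F [a]) (F x)))"

lemma factors_through_imp_unarily_quasi_range_idempotent:
  assumes "factors_through F H"
  shows "unarily_quasi_range_idempotent F"
  using assms unfolding unarily_quasi_range_idempotent_def factors_through_def
  by (fastforce intro: image_eqI[where x = "[_]"])

lemma factors_through_imp_preassociative:
  assumes inj1: "inj (\<lambda>a. F [a])" and "standard F"
    and ft: "factors_through F H" and "associative_op H"
  shows "preassociative F"
  unfolding preassociative_def
proof (intro allI impI)
  fix x y y' z assume eq: "F y = F y'"
  have fH: "\<exists>a. H w = Some a \<and> F w = F [a]" if "w \<noteq> []" for w
    using ft that unfolding factors_through_def by blast
  show "F (x @ y @ z) = F (x @ y' @ z)"
  proof (cases "y = [] \<or> y' = []")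
    case True
    with eq \<open>standard F\<close> have "y = y'" unfolding standard_def by metis
    then show ?thesis by simp
  next
    case False
    then obtain a b where a: "H y = Some a" "F y = F [a]" and b: "H y' = Some b" "F y' = F [b]"
      using fH by blast
    with eq inj1 have "a = b" by (metis injD)
    with a b have "H y = H y'" by simp
    with \<open>associative_op H\<close> have "H (x @ y @ z) = H (x @ y' @ z)"
      unfolding associative_op_def by metis
    with fH[of "x @ y @ z"] fH[of "x @ y' @ z"] False show ?thesis by auto
  qed
qed

lemma factors_through_eq_the_inv:
  assumes "inj (\<lambda>a. F [a])" and "factors_through F H" and "x \<noteq> []"
  shows "H x = Some (the_inv (\<lambda>a. F [a]) (F x))"
  using assms the_inv_f_f[OF assms(1)] unfolding factors_through_def by fastforce

lemma factors_through_unique: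
  assumes "inj (\<lambda>a. F [a])" and "eps_standard H" and "factors_through F H"
  shows "H = canonical_op F"
proof
  fix x show "H x = canonical_op F x"
    using assms factors_through_eq_the_inv[OF assms(1,3)]
    unfolding canonical_op_def eps_standard_def by auto
qed

lemma F_the_inv_F:
  assumes "inj (\<lambda>a. F [a])" and "unarily_quasi_range_idempotent F" and "x \<noteq> []"
  shows "F [the_inv (\<lambda>a. F [a]) (F x)] = F x"
proof -
  from assms(2,3) obtain a where "F x = F [a]"
    unfolding unarily_quasi_range_idempotent_def by blast
  then show ?thesis using the_inv_f_f[OF assms(1)] by simp
qed

lemma eps_standard_canonical_op: "eps_standard (canonical_op F)"
  unfolding eps_standard_def standard_def canonical_op_def by simp

lemma factors_through_canonical_op:
  assumes "inj (\<lambda>a. F [a])" and "unarily_quasi_range_idempotent F"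
  shows "factors_through F (canonical_op F)"
  using F_the_inv_F[OF assms] unfolding factors_through_def canonical_op_def by auto

lemma associative_op_canonical_op:
  assumes "inj (\<lambda>a. F [a])" and "unarily_quasi_range_idempotent F" and pa: "preassociative F"
  shows "associative_op (canonical_op F)"
  unfolding associative_op_def
proof (intro allI)
  fix x y z
  show "canonical_op F (x @ y @ z) = canonical_op F (x @ opt_tuple (canonical_op F y) @ z)"
  proof (cases "y = []")
    case True then show ?thesis by (simp add: canonical_op_def opt_tuple_def)
  next
    case False
    with F_the_inv_F[OF assms(1,2)] pa
    have "F (x @ y @ z) = F (x @ [the_inv (\<lambda>a. F [a]) (F y)] @ z)"
      unfolding preassociative_def by metis
    with False show ?thesis by (simp add: canonical_op_def opt_tuple_def)
  qed
qed

lemma unarily_idempotent_canonical_op: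
  assumes "inj (\<lambda>a. F [a])"
  shows "unarily_idempotent (canonical_op F)"
  using the_inv_f_f[OF assms] unfolding unarily_idempotent_def canonical_op_def by simp

theorem corollary4p5:
  fixes F :: "'a list \<Rightarrow> 'b"
  assumes inj1: "inj (\<lambda>a. F [a])"
  shows "(preassociative F \<and> unarily_quasi_range_idempotent F \<longrightarrow>
           (\<exists>!H. eps_standard H \<and> factors_through F H) \<and>
           (\<forall>H. eps_standard H \<and> factors_through F H \<longrightarrow>
              (\<forall>x. x \<noteq> [] \<longrightarrow> H x = Some (the_inv (\<lambda>a. F [a]) (F x))) \<and>
              associative_op H \<and> unarily_idempotent H))
       \<and> (standard F \<longrightarrow>
           ((\<exists>!H. eps_standard H \<and> factors_through F H) \<and>
            (\<forall>H. eps_standard H \<and> factors_through F H \<longrightarrow>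
              (\<forall>x. x \<noteq> [] \<longrightarrow> H x = Some (the_inv (\<lambda>a. F [a]) (F x))) \<and>
              associative_op H \<and> unarily_idempotent H))
           \<longrightarrow> preassociative F \<and> unarily_quasi_range_idempotent F)"
proof (intro conjI impI)
  assume "preassociative F \<and> unarily_quasi_range_idempotent F"
  then have pa: "preassociative F" and uq: "unarily_quasi_range_idempotent F" by auto
  have exists: "eps_standard (canonical_op F) \<and> factors_through F (canonical_op F)"
    using eps_standard_canonical_op factors_through_canonical_op[OF inj1 uq] by blast
  show "\<exists>!H. eps_standard H \<and> factors_through F H"
    using exists factors_through_unique[OF inj1] by blast
  show "\<forall>H. eps_standard H \<and> factors_through F H \<longrightarrow>
          (\<forall>x. x \<noteq> [] \<longrightarrow> H x = Some (the_inv (\<lambda>a. F [a]) (F x))) \<and>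
          associative_op H \<and> unarily_idempotent H"
    using factors_through_eq_the_inv[OF inj1] factors_through_unique[OF inj1]
      associative_op_canonical_op[OF inj1 uq pa] unarily_idempotent_canonical_op[OF inj1]
    by blast
next
  assume "standard F" and "(\<exists>!H. eps_standard H \<and> factors_through F H) \<and>
            (\<forall>H. eps_standard H \<and> factors_through F H \<longrightarrow>
              (\<forall>x. x \<noteq> [] \<longrightarrow> H x = Some (the_inv (\<lambda>a. F [a]) (F x))) \<and>
              associative_op H \<and> unarily_idempotent H)"
  then obtain H where ft: "factors_through F H" and "associative_op H" by blast
  show "preassociative F"
    using factors_through_imp_preassociative[OF inj1 \<open>standard F\<close> ft \<open>associative_op H\<close>] .
  show "unarily_quasi_range_idempotent F"
    using factors_through_imp_unarily_quasi_range_idempotent[OF ft] .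
qed

end
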